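(* Let $A\neq 1$ and $B\neq 0$ be real constants and consider $$x_{n+10}=\frac{x_n}{A+B\,x_nx_{n+2}x_{n+4}x_{n+6}x_{n+8}}.$$ The equilibrium point $\bar x=0$ is locally asymptotically stable when $|A|>1$. Moreover, for every $A\neq 1$, the nonzero equilibrium points (the real solutions of $A+B\bar x^5-1=0$) are non-hyperbolic.
   Context: An equilibrium $\bar x$ of $x_{n+10}=f(x_n,x_{n+2},\dots,x_{n+8})$ is hyperbolic if no root of the characteristic equation of the linearization of the equation at $\bar x$ has modulus $1$; otherwise it is non-hyperbolic. Local asymptotic stability refers to the standard notion for the equilibrium of this tenth-order recurrence. *)

theory Defs
  imports "HOL-Analysis.Analysis"
begin

text \<open>A tenth-order recurrence x(n+10) = f(x n, x(n+2), x(n+4), x(n+6), x(n+8)).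
  The map f takes its five arguments as a function u :: nat => real, where
  u k stands for x(n + 2k), k = 0..4.\<close>

definition is_solution10 :: "((nat \<Rightarrow> real) \<Rightarrow> real) \<Rightarrow> (nat \<Rightarrow> real) \<Rightarrow> bool" where
  "is_solution10 f x \<longleftrightarrow> (\<forall>n. x (n + 10) = f (\<lambda>k. x (n + 2 * k)))"

definition is_equilibrium10 :: "((nat \<Rightarrow> real) \<Rightarrow> real) \<Rightarrow> real \<Rightarrow> bool" where
  "is_equilibrium10 f xb \<longleftrightarrow> f (\<lambda>_. xb) = xb"

definition locally_stable10 :: "((nat \<Rightarrow> real) \<Rightarrow> real) \<Rightarrow> real \<Rightarrow> bool" where
  "locally_stable10 f xb \<longleftrightarrow>
     (\<forall>\<epsilon>>0. \<exists>\<delta>>0. \<forall>x. is_solution10 f x \<and> (\<forall>i<10. \<bar>x i - xb\<bar> < \<delta>)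
        \<longrightarrow> (\<forall>n. \<bar>x n - xb\<bar> < \<epsilon>))"

definition locally_asymptotically_stable10 :: "((nat \<Rightarrow> real) \<Rightarrow> real) \<Rightarrow> real \<Rightarrow> bool" where
  "locally_asymptotically_stable10 f xb \<longleftrightarrow>
     locally_stable10 f xb \<and>
     (\<exists>\<gamma>>0. \<forall>x. is_solution10 f x \<and> (\<forall>i<10. \<bar>x i - xb\<bar> < \<gamma>)
        \<longrightarrow> x \<longlonglongrightarrow> xb)"

definition partial10 :: "((nat \<Rightarrow> real) \<Rightarrow> real) \<Rightarrow> real \<Rightarrow> nat \<Rightarrow> real" where
  "partial10 f xb k = deriv (\<lambda>t. f ((\<lambda>_. xb)(k := t))) xb"

definition char_root10 :: "((nat \<Rightarrow> real) \<Rightarrow> real) \<Rightarrow> real \<Rightarrow> complex \<Rightarrow> bool" where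
  "char_root10 f xb z \<longleftrightarrow>
     z ^ 10 = (\<Sum>k<5. complex_of_real (partial10 f xb k) * z ^ (2 * k))"

definition hyperbolic10 :: "((nat \<Rightarrow> real) \<Rightarrow> real) \<Rightarrow> real \<Rightarrow> bool" where
  "hyperbolic10 f xb \<longleftrightarrow> (\<forall>z. char_root10 f xb z \<longrightarrow> cmod z \<noteq> 1)"

end

theory Submission
  imports Defs
begin

text \<open>Near 0 the denominator A + B x(n) x(n+2) x(n+4) x(n+6) x(n+8) stays close to A, so for
  |A| > 1 the recurrence contracts by a fixed factor below 1 every ten steps, and small solutions
  decay geometrically. At a nonzero equilibrium A + B x^5 = 1 the partial derivatives are A with
  respect to x(n) and A - 1 with respect to the other four arguments, so the characteristic
  equation reads z^10 = 1 + (A - 1)(1 + z^2 + z^4 + z^6 + z^8). Every tenth root of unity z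
  with z^2 \<noteq> 1 solves it, whatever A is, and lies on the unit circle. Neither part needs B \<noteq> 0.\<close>

lemma lag_nonexpansive_bounded:
  fixes x :: "nat \<Rightarrow> real"
  assumes "p > 0" and init: "\<forall>i<p. \<bar>x i\<bar> < \<delta>"
    and step: "\<And>m. \<forall>j<m + p. \<bar>x j\<bar> < \<delta> \<Longrightarrow> \<bar>x (m + p)\<bar> \<le> \<bar>x m\<bar>"
  shows "\<bar>x n\<bar> < \<delta>"
proof (induction n rule: less_induct)
  case (less n)
  show ?case
  proof (cases "n < p")
    case True
    then show ?thesis using init by blast
  next
    case False
    then obtain m where m: "n = m + p" by (metis add.commute le_Suc_ex not_less)
    then have "\<bar>x n\<bar> \<le> \<bar>x m\<bar>" using step less by blast
    also have "\<bar>x m\<bar> < \<delta>" using less m \<open>p > 0\<close> by simp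
    finally show ?thesis .
  qed
qed

lemma lag_contraction_tendsto_zero:
  fixes x :: "nat \<Rightarrow> real"
  assumes "p > 0" "0 \<le> q" "q < 1" and contr: "\<And>n. \<bar>x (n + p)\<bar> \<le> q * \<bar>x n\<bar>"
  shows "x \<longlonglongrightarrow> 0"
proof -
  define M where "M = Max ((\<lambda>r. \<bar>x r\<bar>) ` {..<p})"
  have iterate: "\<bar>x (p * k + r)\<bar> \<le> q ^ k * \<bar>x r\<bar>" for k r
  proof (induction k)
    case (Suc k)
    have "\<bar>x (p * Suc k + r)\<bar> = \<bar>x ((p * k + r) + p)\<bar>" by (simp add: algebra_simps)
    also have "\<dots> \<le> q * \<bar>x (p * k + r)\<bar>" by (rule contr)
    also have "\<dots> \<le> q ^ Suc k * \<bar>x r\<bar>" using Suc \<open>0 \<le> q\<close> by (simp add: mult_left_mono mult.assoc)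
    finally show ?case .
  qed simp
  have bound: "norm (x n) \<le> q ^ (n div p) * M" for n
  proof -
    have "\<bar>x (n mod p)\<bar> \<le> M"
      unfolding M_def using \<open>p > 0\<close> by (intro Max_ge) auto
    then have "q ^ (n div p) * \<bar>x (n mod p)\<bar> \<le> q ^ (n div p) * M"
      using \<open>0 \<le> q\<close> by (simp add: mult_left_mono)
    moreover have "\<bar>x n\<bar> \<le> q ^ (n div p) * \<bar>x (n mod p)\<bar>"
      using iterate[of "n div p" "n mod p"] by simp
    ultimately show ?thesis by simp
  qed
  have "(\<lambda>n. q ^ (n div p) * M) \<longlonglongrightarrow> 0"
    using assms(1-3) by (intro tendsto_mult_left_zero tendsto_power_zero filterlim_at_top_div_const_nat) auto
  then show ?thesis
    by (rule Lim_null_comparison[rotated]) (use bound in auto)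
qed

lemma locally_asymptotically_stable10_zeroI:
  assumes "\<delta>\<^sub>0 > 0" "0 \<le> q" "q < 1"
    and contr: "\<And>u. \<forall>k<5. \<bar>u k\<bar> < \<delta>\<^sub>0 \<Longrightarrow> \<bar>f u\<bar> \<le> q * \<bar>u 0\<bar>"
  shows "locally_asymptotically_stable10 f 0"
proof -
  have small_solution: "(\<forall>n. \<bar>x n\<bar> < \<delta>) \<and> x \<longlonglongrightarrow> 0"
    if sol: "is_solution10 f x" and "\<delta> \<le> \<delta>\<^sub>0" and init: "\<forall>i<10. \<bar>x i\<bar> < \<delta>" for x \<delta>
  proof -
    have step: "\<bar>x (m + 10)\<bar> \<le> q * \<bar>x m\<bar>" if "\<forall>k<5. \<bar>x (m + 2 * k)\<bar> < \<delta>\<^sub>0" for m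
      using contr[OF that] sol unfolding is_solution10_def by simp
    have bounded: "\<bar>x n\<bar> < \<delta>" for n
    proof (rule lag_nonexpansive_bounded[of 10 x \<delta>])
      fix m assume window: "\<forall>j<m + 10. \<bar>x j\<bar> < \<delta>"
      have "\<bar>x (m + 2 * k)\<bar> < \<delta>\<^sub>0" if "k < 5" for k
        using window[rule_format, of "m + 2 * k"] that \<open>\<delta> \<le> \<delta>\<^sub>0\<close> by simp
      then have "\<forall>k<5. \<bar>x (m + 2 * k)\<bar> < \<delta>\<^sub>0" by blast
      then have "\<bar>x (m + 10)\<bar> \<le> q * \<bar>x m\<bar>" by (rule step)
      also have "\<dots> \<le> \<bar>x m\<bar>" using \<open>0 \<le> q\<close> \<open>q < 1\<close> by (intro mult_left_le_one_le) auto
      finally show "\<bar>x (m + 10)\<bar> \<le> \<bar>x m\<bar>" .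
    qed (use init in auto)
    have "\<bar>x (n + 10)\<bar> \<le> q * \<bar>x n\<bar>" for n
      using bounded \<open>\<delta> \<le> \<delta>\<^sub>0\<close> by (intro step) (meson less_le_trans)
    then show ?thesis
      using bounded lag_contraction_tendsto_zero[of 10 q x] assms(2,3) by auto
  qed
  show ?thesis
    unfolding locally_asymptotically_stable10_def locally_stable10_def
  proof (intro conjI allI impI)
    fix \<epsilon> :: real assume "\<epsilon> > 0"
    show "\<exists>\<delta>>0. \<forall>x. is_solution10 f x \<and> (\<forall>i<10. \<bar>x i - 0\<bar> < \<delta>) \<longrightarrow> (\<forall>n. \<bar>x n - 0\<bar> < \<epsilon>)"
    proof (intro exI[of _ "min \<delta>\<^sub>0 \<epsilon>"] conjI allI impI)
      show "0 < min \<delta>\<^sub>0 \<epsilon>" using \<open>\<delta>\<^sub>0 > 0\<close> \<open>\<epsilon> > 0\<close> by simp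
      fix x n assume "is_solution10 f x \<and> (\<forall>i<10. \<bar>x i - 0\<bar> < min \<delta>\<^sub>0 \<epsilon>)"
      then have "\<bar>x n\<bar> < min \<delta>\<^sub>0 \<epsilon>" using small_solution[of x "min \<delta>\<^sub>0 \<epsilon>"] by simp
      then show "\<bar>x n - 0\<bar> < \<epsilon>" by simp
    qed
  next
    show "\<exists>\<gamma>>0. \<forall>x. is_solution10 f x \<and> (\<forall>i<10. \<bar>x i - 0\<bar> < \<gamma>) \<longrightarrow> x \<longlonglongrightarrow> 0"
      using small_solution[of _ \<delta>\<^sub>0] \<open>\<delta>\<^sub>0 > 0\<close> by (intro exI[of _ \<delta>\<^sub>0]) simp
  qed
qed

lemma zero_locally_asymptotically_stable:
  fixes A B :: real
  assumes "\<bar>A\<bar> > 1"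
  shows "locally_asymptotically_stable10 (\<lambda>u. u 0 / (A + B * u 0 * u 1 * u 2 * u 3 * u 4)) 0"
proof -
  define \<delta>\<^sub>0 where "\<delta>\<^sub>0 = min 1 ((\<bar>A\<bar> - 1) / (2 * \<bar>B\<bar> + 2))"
  have "\<delta>\<^sub>0 > 0" "\<delta>\<^sub>0 \<le> 1" using assms unfolding \<delta>\<^sub>0_def by (auto simp: add_pos_nonneg)
  have B\<delta>: "\<bar>B\<bar> * \<delta>\<^sub>0 \<le> (\<bar>A\<bar> - 1) / 2"
  proof -
    have "\<bar>B\<bar> * \<delta>\<^sub>0 \<le> \<bar>B\<bar> * ((\<bar>A\<bar> - 1) / (2 * \<bar>B\<bar> + 2))"
      unfolding \<delta>\<^sub>0_def by (intro mult_left_mono) auto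
    also have "\<dots> \<le> (\<bar>A\<bar> - 1) / 2" using assms by (simp add: field_simps)
    finally show ?thesis .
  qed
  show ?thesis
  proof (rule locally_asymptotically_stable10_zeroI[where \<delta>\<^sub>0 = \<delta>\<^sub>0 and q = "2 / (\<bar>A\<bar> + 1)"])
    show "\<delta>\<^sub>0 > 0" "0 \<le> 2 / (\<bar>A\<bar> + 1)" "2 / (\<bar>A\<bar> + 1) < 1" using \<open>\<delta>\<^sub>0 > 0\<close> assms by auto
    fix u :: "nat \<Rightarrow> real" assume small: "\<forall>k<5. \<bar>u k\<bar> < \<delta>\<^sub>0"
    have le_\<delta>: "\<bar>u 0\<bar> \<le> \<delta>\<^sub>0" and le_1: "\<And>k. k < 5 \<Longrightarrow> \<bar>u k\<bar> \<le> 1"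
      using small \<open>\<delta>\<^sub>0 \<le> 1\<close> by (auto intro: order.strict_implies_order order_trans)
    have "\<bar>u 0 * u 1 * u 2 * u 3 * u 4\<bar> \<le> \<delta>\<^sub>0 * 1 * 1 * 1 * 1"
      unfolding abs_mult using le_\<delta> le_1[of 1] le_1[of 2] le_1[of 3] le_1[of 4] \<open>\<delta>\<^sub>0 > 0\<close>
      by (intro mult_mono) auto
    moreover define P where "P = B * u 0 * u 1 * u 2 * u 3 * u 4"
    ultimately have "\<bar>P\<bar> \<le> \<bar>B\<bar> * \<delta>\<^sub>0"
      by (simp add: abs_mult mult.assoc mult_left_mono)
    moreover have "\<bar>A\<bar> - \<bar>P\<bar> \<le> \<bar>A + P\<bar>"
      using abs_triangle_ineq2[of A "- P"] by simp
    ultimately have denominator: "\<bar>A + P\<bar> \<ge> (\<bar>A\<bar> + 1) / 2"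
      using B\<delta> by argo
    have "\<bar>u 0 / (A + P)\<bar> = \<bar>u 0\<bar> / \<bar>A + P\<bar>"
      by (simp add: abs_divide)
    also have "\<dots> \<le> \<bar>u 0\<bar> / ((\<bar>A\<bar> + 1) / 2)"
      using denominator assms by (intro divide_left_mono mult_pos_pos) auto
    finally show "\<bar>u 0 / (A + B * u 0 * u 1 * u 2 * u 3 * u 4)\<bar> \<le> 2 / (\<bar>A\<bar> + 1) * \<bar>u 0\<bar>"
      by (simp add: P_def mult.commute)
  qed
qed

lemma equilibrium10_nonzero_iff:
  fixes A B xb :: real
  assumes "xb \<noteq> 0"
  shows "is_equilibrium10 (\<lambda>u. u 0 / (A + B * u 0 * u 1 * u 2 * u 3 * u 4)) xb \<longleftrightarrow> A + B * xb ^ 5 = 1"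
proof -
  have "is_equilibrium10 (\<lambda>u. u 0 / (A + B * u 0 * u 1 * u 2 * u 3 * u 4)) xb \<longleftrightarrow> xb / (A + B * xb ^ 5) = xb"
    unfolding is_equilibrium10_def by (simp add: eval_nat_numeral mult.assoc)
  also have "\<dots> \<longleftrightarrow> A + B * xb ^ 5 = 1"
    using assms by (cases "A + B * xb ^ 5 = 0") (auto simp: divide_eq_eq)
  finally show ?thesis .
qed

lemma partial10_at_equilibrium:
  fixes A B xb :: real
  assumes equilibrium: "A + B * xb ^ 5 = 1" and "k < 5"
  shows "partial10 (\<lambda>u. u 0 / (A + B * u 0 * u 1 * u 2 * u 3 * u 4)) xb k = (if k = 0 then A else A - 1)"
proof -
  define c where "c = B * xb ^ 4"
  have c: "A + c * xb = 1" using equilibrium by (simp add: c_def eval_nat_numeral mult_ac)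
  show ?thesis
  proof (cases "k = 0")
    case True
    have "((\<lambda>t. t / (A + c * t)) has_real_derivative A) (at xb)"
      by (rule derivative_eq_intros refl | simp add: c)+ (use c in \<open>simp add: algebra_simps\<close>)
    moreover have "(\<lambda>t. (\<lambda>u. u 0 / (A + B * u 0 * u 1 * u 2 * u 3 * u 4)) ((\<lambda>_. xb)(k := t)))
        = (\<lambda>t. t / (A + c * t))"
      using True by (simp add: c_def fun_eq_iff power4_eq_xxxx mult_ac)
    ultimately show ?thesis unfolding partial10_def using True by (simp add: DERIV_imp_deriv)
  next
    case False
    have "((\<lambda>t. xb / (A + c * t)) has_real_derivative A - 1) (at xb)"
      by (rule derivative_eq_intros refl | simp add: c)+ (use c in \<open>simp add: algebra_simps\<close>)
    moreover have "k \<in> {1, 2, 3, 4}" using False \<open>k < 5\<close> by auto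
    then have "(\<lambda>t. (\<lambda>u. u 0 / (A + B * u 0 * u 1 * u 2 * u 3 * u 4)) ((\<lambda>_. xb)(k := t)))
        = (\<lambda>t. xb / (A + c * t))"
      by (auto simp: c_def fun_eq_iff power4_eq_xxxx mult_ac)
    ultimately show ?thesis unfolding partial10_def using False by (simp add: DERIV_imp_deriv)
  qed
qed

lemma not_hyperbolic10I:
  assumes partials: "\<And>k. k < 5 \<Longrightarrow> partial10 f xb k = (if k = 0 then a else a - 1)"
  shows "\<not> hyperbolic10 f xb"
proof -
  define z where "z = cis (pi / 5)"
  have "z ^ 10 = cis (real 10 * (pi / 5))" unfolding z_def by (rule Complex.DeMoivre)
  then have z10: "z ^ 10 = 1" by simp
  have "z ^ 2 = cis (real 2 * (pi / 5))" unfolding z_def by (rule Complex.DeMoivre)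
  then have "Im (z ^ 2) = sin (2 * pi / 5)" by simp
  moreover have "sin (2 * pi / 5) > 0" by (rule sin_gt_zero) auto
  ultimately have "z ^ 2 \<noteq> 1" by auto
  then have "(\<Sum>k<5. (z ^ 2) ^ k) = ((z ^ 2) ^ 5 - 1) / (z ^ 2 - 1)"
    by (rule geometric_sum)
  also have "\<dots> = 0" using z10 by (simp flip: power_mult)
  finally have root_sum: "(\<Sum>k<5. (z ^ 2) ^ k) = 0" .
  have "(\<Sum>k<5. complex_of_real (partial10 f xb k) * z ^ (2 * k))
      = (\<Sum>k<5. complex_of_real (if k = 0 then a else a - 1) * z ^ (2 * k))"
    using partials by (intro sum.cong) auto
  also have "\<dots> = complex_of_real (a - 1) * (\<Sum>k<5. (z ^ 2) ^ k) + 1"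
    by (simp add: numeral_eq_Suc power_mult algebra_simps)
  finally have "(\<Sum>k<5. complex_of_real (partial10 f xb k) * z ^ (2 * k)) = 1"
    using root_sum by simp
  then have "char_root10 f xb z" unfolding char_root10_def using z10 by simp
  moreover have "cmod z = 1" unfolding z_def by simp
  ultimately show ?thesis unfolding hyperbolic10_def by blast
qed

theorem theorem6:
  fixes A B :: real
  assumes "A \<noteq> 1" and "B \<noteq> 0"
  defines "f \<equiv> (\<lambda>u::nat \<Rightarrow> real. u 0 / (A + B * u 0 * u 1 * u 2 * u 3 * u 4))"
  shows "(\<bar>A\<bar> > 1 \<longrightarrow> locally_asymptotically_stable10 f 0)
       \<and> (\<forall>xb. (xb \<noteq> 0 \<and> is_equilibrium10 f xb) \<longleftrightarrow> A + B * xb ^ 5 - 1 = 0)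
       \<and> (\<forall>xb. xb \<noteq> 0 \<and> is_equilibrium10 f xb \<longrightarrow> \<not> hyperbolic10 f xb)"
proof -
  have equilibria: "(xb \<noteq> 0 \<and> is_equilibrium10 f xb) \<longleftrightarrow> A + B * xb ^ 5 = 1" for xb
    using equilibrium10_nonzero_iff[of xb A B] \<open>A \<noteq> 1\<close> unfolding f_def by (cases "xb = 0") auto
  have "\<not> hyperbolic10 f xb" if "xb \<noteq> 0 \<and> is_equilibrium10 f xb" for xb
    using partial10_at_equilibrium[of A B xb] equilibria that unfolding f_def
    by (intro not_hyperbolic10I[where a = A]) blast
  then show ?thesis
    using zero_locally_asymptotically_stable[of A B] equilibria unfolding f_def by auto
qed

end
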